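(* Let $G$ be a countable connected graph containing no alternating ray, and let $T$ be a normal spanning tree of $G$ with root $r$. Then $\mathrm{rank}_T(v)$ is defined for every vertex $v\in V(G)$.
   Context: A ray is a one-way infinite path; it is alternating if it passes through infinitely many vertices of finite degree and infinitely many of infinite degree (degrees taken in $G$). A spanning tree $T$ with root $r$ induces the tree order $\le$ ($u\le v$ iff $u$ lies on the path in $T$ from $r$ to $v$); $T$ is normal if the endpoints of every edge of $G$ are $\le$-comparable. $\lfloor v\rfloor=\{u:u\ge v\}$. The $T$-rank is defined by transfinite recursion: $\mathrm{rank}_T(v)=0$ if $\lfloor v\rfloor$ consists only of vertices of finite degree or only of vertices of infinite degree. For an ordinal $\alpha>0$, a vertex $v$ of infinite (resp. finite) degree has $\mathrm{rank}_T(v)=\alpha$ if no rank smaller than $\alpha$ has been assigned to $v$ and every vertex of finite (resp. infinite) degree in $\lfloor v\rfloor\setminus\{v\}$ has been assigned a rank smaller than $\alpha$. *)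

theory Defs
  imports Main "HOL-Library.Countable_Set"
begin

definition graph :: "'a set \<Rightarrow> ('a \<Rightarrow> 'a \<Rightarrow> bool) \<Rightarrow> bool" where
  "graph V adj \<longleftrightarrow> (\<forall>x y. adj x y \<longrightarrow> x \<in> V \<and> y \<in> V \<and> x \<noteq> y \<and> adj y x)"

definition is_path :: "'a set \<Rightarrow> ('a \<Rightarrow> 'a \<Rightarrow> bool) \<Rightarrow> 'a list \<Rightarrow> bool" where
  "is_path V adj p \<longleftrightarrow> p \<noteq> [] \<and> distinct p \<and> set p \<subseteq> V \<and>
     (\<forall>i. Suc i < length p \<longrightarrow> adj (p ! i) (p ! Suc i))"

definition connected_graph :: "'a set \<Rightarrow> ('a \<Rightarrow> 'a \<Rightarrow> bool) \<Rightarrow> bool" where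
  "connected_graph V adj \<longleftrightarrow> V \<noteq> {} \<and>
     (\<forall>u\<in>V. \<forall>v\<in>V. \<exists>p. is_path V adj p \<and> hd p = u \<and> last p = v)"

definition nbrs :: "('a \<Rightarrow> 'a \<Rightarrow> bool) \<Rightarrow> 'a \<Rightarrow> 'a set" where
  "nbrs adj v = {u. adj v u}"

definition infinite_degree :: "('a \<Rightarrow> 'a \<Rightarrow> bool) \<Rightarrow> 'a \<Rightarrow> bool" where
  "infinite_degree adj v \<longleftrightarrow> infinite (nbrs adj v)"

definition is_ray :: "'a set \<Rightarrow> ('a \<Rightarrow> 'a \<Rightarrow> bool) \<Rightarrow> (nat \<Rightarrow> 'a) \<Rightarrow> bool" where
  "is_ray V adj f \<longleftrightarrow> inj f \<and> range f \<subseteq> V \<and> (\<forall>i. adj (f i) (f (Suc i)))"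

definition alternating_ray :: "'a set \<Rightarrow> ('a \<Rightarrow> 'a \<Rightarrow> bool) \<Rightarrow> (nat \<Rightarrow> 'a) \<Rightarrow> bool" where
  "alternating_ray V adj f \<longleftrightarrow> is_ray V adj f \<and>
     infinite {i. \<not> infinite_degree adj (f i)} \<and> infinite {i. infinite_degree adj (f i)}"

definition is_tree :: "'a set \<Rightarrow> ('a \<Rightarrow> 'a \<Rightarrow> bool) \<Rightarrow> bool" where
  "is_tree V t \<longleftrightarrow> graph V t \<and> V \<noteq> {} \<and>
     (\<forall>u\<in>V. \<forall>v\<in>V. \<exists>!p. is_path V t p \<and> hd p = u \<and> last p = v)"

definition spanning_tree :: "'a set \<Rightarrow> ('a \<Rightarrow> 'a \<Rightarrow> bool) \<Rightarrow> ('a \<Rightarrow> 'a \<Rightarrow> bool) \<Rightarrow> bool" where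
  "spanning_tree V adj t \<longleftrightarrow> is_tree V t \<and> (\<forall>x y. t x y \<longrightarrow> adj x y)"

definition tree_le :: "'a set \<Rightarrow> ('a \<Rightarrow> 'a \<Rightarrow> bool) \<Rightarrow> 'a \<Rightarrow> 'a \<Rightarrow> 'a \<Rightarrow> bool" where
  "tree_le V t r u v \<longleftrightarrow> (\<exists>p. is_path V t p \<and> hd p = r \<and> last p = v \<and> u \<in> set p)"

definition normal_spanning_tree ::
  "'a set \<Rightarrow> ('a \<Rightarrow> 'a \<Rightarrow> bool) \<Rightarrow> ('a \<Rightarrow> 'a \<Rightarrow> bool) \<Rightarrow> 'a \<Rightarrow> bool" where
  "normal_spanning_tree V adj t r \<longleftrightarrow> spanning_tree V adj t \<and> r \<in> V \<and>
     (\<forall>x y. adj x y \<longrightarrow> tree_le V t r x y \<or> tree_le V t r y x)"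

definition up :: "'a set \<Rightarrow> ('a \<Rightarrow> 'a \<Rightarrow> bool) \<Rightarrow> 'a \<Rightarrow> 'a \<Rightarrow> 'a set" where
  "up V t r v = {u. tree_le V t r v u}"

text \<open>The set of vertices to which the transfinite recursion assigns some T-rank.
  The recursion assigns rank \<alpha> to v once all relevant vertices above v have rank < \<alpha>;
  the union over all ordinal stages is exactly the least fixed point of the
  corresponding monotone operator, i.e. the following inductive predicate.\<close>
inductive rank_defined :: "'a set \<Rightarrow> ('a \<Rightarrow> 'a \<Rightarrow> bool) \<Rightarrow> ('a \<Rightarrow> 'a \<Rightarrow> bool) \<Rightarrow> 'a \<Rightarrow> 'a \<Rightarrow> bool"
  for V adj t r where
  rank_zero: "v \<in> V \<Longrightarrow>
     (\<forall>u\<in>up V t r v. \<not> infinite_degree adj u) \<or> (\<forall>u\<in>up V t r v. infinite_degree adj u) \<Longrightarrow>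
     rank_defined V adj t r v"
| rank_inf: "v \<in> V \<Longrightarrow> infinite_degree adj v \<Longrightarrow>
     (\<forall>u\<in>up V t r v - {v}. \<not> infinite_degree adj u \<longrightarrow> rank_defined V adj t r u) \<Longrightarrow>
     rank_defined V adj t r v"
| rank_fin: "v \<in> V \<Longrightarrow> \<not> infinite_degree adj v \<Longrightarrow>
     (\<forall>u\<in>up V t r v - {v}. infinite_degree adj u \<longrightarrow> rank_defined V adj t r u) \<Longrightarrow>
     rank_defined V adj t r v"

end

theory Submission
  imports Defs "HOL-Library.Sublist"
begin

text \<open>Suppose some vertex has no rank. Unwinding the recursive clauses, above every such vertex
  there is another rankless vertex of the opposite degree type. Iterating gives a chain
  \<open>v\<^sub>0 < v\<^sub>1 < \<dots>\<close> in the tree order whose degree types alternate. The tree paths from the root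
  to the \<open>v\<^sub>n\<close> are strictly increasing prefixes of each other, so their union is a ray of \<open>T\<close>,
  hence of \<open>G\<close>, passing through every \<open>v\<^sub>n\<close>; this ray is alternating.\<close>

definition tree_path :: "'a set \<Rightarrow> ('a \<Rightarrow> 'a \<Rightarrow> bool) \<Rightarrow> 'a \<Rightarrow> 'a \<Rightarrow> 'a list" where
  "tree_path V t r v = (THE p. is_path V t p \<and> hd p = r \<and> last p = v)"

lemma tree_path_unique:
  assumes "is_tree V t" "r \<in> V" "v \<in> V" "is_path V t p" "hd p = r" "last p = v"
  shows "tree_path V t r v = p"
proof -
  have "\<exists>!p. is_path V t p \<and> hd p = r \<and> last p = v"
    using assms(1-3) unfolding is_tree_def by blast
  then show ?thesis
    using assms(4-6) unfolding tree_path_def by (blast intro: the1_equality)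
qed

lemma tree_path_is_path:
  assumes "is_tree V t" "r \<in> V" "v \<in> V"
  shows "is_path V t (tree_path V t r v)" "hd (tree_path V t r v) = r"
    "last (tree_path V t r v) = v"
proof -
  have "\<exists>!p. is_path V t p \<and> hd p = r \<and> last p = v"
    using assms unfolding is_tree_def by blast
  from theI'[OF this] show "is_path V t (tree_path V t r v)" "hd (tree_path V t r v) = r"
    "last (tree_path V t r v) = v"
    unfolding tree_path_def by auto
qed

lemma is_path_take:
  assumes "is_path V t p" "0 < k"
  shows "is_path V t (take k p)"
  using assms unfolding is_path_def
  by (auto simp: set_take_subset[THEN subset_trans] dest: in_set_takeD)

lemma tree_le_mem_tree_path:
  assumes "is_tree V t" "r \<in> V" "tree_le V t r u v"
  shows "u \<in> V" "v \<in> V" "u \<in> set (tree_path V t r v)"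
proof -
  obtain p where p: "is_path V t p" "hd p = r" "last p = v" "u \<in> set p"
    using assms(3) unfolding tree_le_def by blast
  then show "u \<in> V" "v \<in> V"
    unfolding is_path_def by auto
  then show "u \<in> set (tree_path V t r v)"
    using tree_path_unique[OF assms(1,2) _ p(1-3)] p(4) by simp
qed

lemma tree_le_strict_prefix:
  assumes tree: "is_tree V t" and rV: "r \<in> V" and le: "tree_le V t r u v" and "u \<noteq> v"
  shows "strict_prefix (tree_path V t r u) (tree_path V t r v)"
proof
  let ?p = "tree_path V t r v"
  have uV: "u \<in> V" and vV: "v \<in> V" and "u \<in> set ?p"
    using tree_le_mem_tree_path[OF tree rV le] by auto
  then obtain i where i: "i < length ?p" "?p ! i = u"
    by (metis in_set_conv_nth)
  have "tree_path V t r u = take (Suc i) ?p"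
  proof (rule tree_path_unique[OF tree rV uV])
    show "is_path V t (take (Suc i) ?p)"
      using tree_path_is_path(1)[OF tree rV vV] by (rule is_path_take) simp
    show "hd (take (Suc i) ?p) = r"
      using tree_path_is_path(2)[OF tree rV vV] by simp
    show "last (take (Suc i) ?p) = u"
      using i by (simp add: take_Suc_conv_app_nth)
  qed
  then show "prefix (tree_path V t r u) ?p"
    by (simp add: take_is_prefix)
  show "tree_path V t r u \<noteq> ?p"
    using assms(4) tree_path_is_path(3)[OF tree rV uV] tree_path_is_path(3)[OF tree rV vV]
    by auto
qed

lemma prefix_nth: "prefix xs ys \<Longrightarrow> i < length xs \<Longrightarrow> xs ! i = ys ! i"
  by (auto elim: prefixE simp: nth_append)

lemma strict_prefix_chain_prefix:
  assumes "\<And>n. strict_prefix (P n) (P (Suc n))" "n \<le> m"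
  shows "prefix (P n) (P m)"
  using assms(2)
proof (induction rule: dec_induct)
  case (step k)
  then show ?case
    using assms(1)[of k] prefix_order.trans prefix_order.strict_implies_order by blast
qed simp

lemma strict_prefix_chain_length:
  assumes "\<And>n. strict_prefix (P n) (P (Suc n))" "P 0 \<noteq> []"
  shows "n < length (P n)"
proof (induction n)
  case (Suc n)
  then show ?case
    using prefix_length_less[OF assms(1)[of n]] by simp
qed (use assms(2) in simp)

lemma strict_prefix_chain_diagonal:
  assumes chain: "\<And>n. strict_prefix (P n) (P (Suc n))" and "P 0 \<noteq> []"
    and "i < length (P n)"
  shows "P i ! i = P n ! i"
proof (cases "i \<le> n")
  case True
  then show ?thesis
    using prefix_nth strict_prefix_chain_prefix[of P, OF chain True]
      strict_prefix_chain_length[of P, OF chain \<open>P 0 \<noteq> []\<close>] by blast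
next
  case False
  then show ?thesis
    using prefix_nth[OF strict_prefix_chain_prefix[of P, OF chain, of n i] assms(3)] by simp
qed

lemma strict_prefix_chain_ray:
  assumes chain: "\<And>n. strict_prefix (P n) (P (Suc n))" and path: "\<And>n. is_path V t (P n)"
  shows "is_ray V t (\<lambda>i. P i ! i)"
  unfolding is_ray_def
proof (intro conjI allI)
  have "P 0 \<noteq> []"
    using path unfolding is_path_def by blast
  note long = strict_prefix_chain_length[of P, OF chain this]
  note diagonal = strict_prefix_chain_diagonal[of P, OF chain \<open>P 0 \<noteq> []\<close>]
  show "inj (\<lambda>i. P i ! i)"
  proof (rule injI)
    fix i j :: nat
    let ?m = "max i j"
    have bounds: "i < length (P ?m)" "j < length (P ?m)"
      using long[of ?m] by auto
    assume "P i ! i = P j ! j"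
    then have "P ?m ! i = P ?m ! j"
      using diagonal[OF bounds(1)] diagonal[OF bounds(2)] by simp
    moreover have "distinct (P ?m)"
      using path unfolding is_path_def by blast
    ultimately show "i = j"
      using bounds nth_eq_iff_index_eq by blast
  qed
  show "range (\<lambda>i. P i ! i) \<subseteq> V"
    using nth_mem[OF long] path unfolding is_path_def by blast
  show "t (P i ! i) (P (Suc i) ! Suc i)" for i
    using diagonal[of i "Suc i"] path[of "Suc i"] long[of "Suc i"]
    unfolding is_path_def by simp
qed

lemma tree_chain_ray:
  assumes tree: "is_tree V t" and rV: "r \<in> V"
    and chain: "\<And>n. tree_le V t r (w n) (w (Suc n))" "\<And>n. w n \<noteq> w (Suc n)"
  obtains f L where "is_ray V t f" "strict_mono L" "\<And>n. f (L n) = w n"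
proof -
  define P where "P n = tree_path V t r (w n)" for n
  have wV: "w n \<in> V" for n
    using tree_le_mem_tree_path(1)[OF tree rV chain(1)] .
  have path: "is_path V t (P n)" and ends: "last (P n) = w n" for n
    unfolding P_def using tree_path_is_path[OF tree rV wV] by auto
  have strict: "strict_prefix (P n) (P (Suc n))" for n
    unfolding P_def using tree_le_strict_prefix[OF tree rV chain] .
  have "P 0 \<noteq> []"
    using path unfolding is_path_def by blast
  note long = strict_prefix_chain_length[of P, OF strict this]
  define L where "L n = length (P n) - 1" for n
  have "strict_mono L"
    unfolding strict_mono_Suc_iff L_def
  proof
    fix n
    show "length (P n) - 1 < length (P (Suc n)) - 1"
      using prefix_length_less[OF strict, of n] long[of n] by linarith
  qed
  moreover have "P (L n) ! L n = w n" for n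
  proof -
    have "P n \<noteq> []"
      using path[of n] unfolding is_path_def by blast
    then show ?thesis
      using strict_prefix_chain_diagonal[of P, OF strict \<open>P 0 \<noteq> []\<close>, of "L n" n] ends[of n]
      by (simp add: L_def last_conv_nth)
  qed
  ultimately show thesis
    using that strict_prefix_chain_ray[of P, OF strict path] by blast
qed

lemma infinite_alternating_values:
  fixes Q :: "nat \<Rightarrow> bool"
  assumes "\<And>n. Q (Suc n) \<longleftrightarrow> \<not> Q n"
  shows "infinite {n. Q n = b}"
  unfolding infinite_nat_iff_unbounded_le
proof
  fix N
  show "\<exists>n\<ge>N. n \<in> {n. Q n = b}"
  proof (cases "Q N = b")
    case False
    then show ?thesis
      using assms[of N] by (intro exI[of _ "Suc N"]) auto
  qed auto
qed

lemma infinite_preimage_strict_mono: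
  fixes L :: "nat \<Rightarrow> nat"
  assumes "strict_mono L" "infinite {n. Q (f (L n))}"
  shows "infinite {i. Q (f i)}"
proof
  assume "finite {i. Q (f i)}"
  moreover have "L ` {n. Q (f (L n))} \<subseteq> {i. Q (f i)}"
    by auto
  ultimately have "finite (L ` {n. Q (f (L n))})"
    by (rule finite_subset[rotated])
  moreover have "inj_on L {n. Q (f (L n))}"
    using strict_mono_imp_inj_on[OF assms(1)] .
  ultimately show False
    using assms(2) finite_imageD by blast
qed

lemma rankless_above:
  assumes "v \<in> V" "\<not> rank_defined V adj t r v"
  obtains u where "tree_le V t r v u" "u \<noteq> v" "\<not> rank_defined V adj t r u"
    "infinite_degree adj u \<longleftrightarrow> \<not> infinite_degree adj v"
proof (cases "infinite_degree adj v")
  case True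
  then show ?thesis
    using that assms rank_inf[of v V adj t r] unfolding up_def by blast
next
  case False
  then show ?thesis
    using that assms rank_fin[of v V adj t r] unfolding up_def by blast
qed

theorem lemma3p2:
  fixes V :: "'a set" and adj t :: "'a \<Rightarrow> 'a \<Rightarrow> bool" and r :: 'a
  assumes "graph V adj"
    and "countable V"
    and "connected_graph V adj"
    and "\<not> (\<exists>f. alternating_ray V adj f)"
    and "normal_spanning_tree V adj t r"
  shows "\<forall>v\<in>V. rank_defined V adj t r v"
proof (rule ccontr)
  have tree: "is_tree V t" and rV: "r \<in> V" and sub: "\<And>x y. t x y \<Longrightarrow> adj x y"
    using assms(5) unfolding normal_spanning_tree_def spanning_tree_def by auto
  let ?I = "infinite_degree adj"
  let ?N = "\<lambda>v. v \<in> V \<and> \<not> rank_defined V adj t r v"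
  have "\<exists>u. ?N u \<and> tree_le V t r v u \<and> u \<noteq> v \<and> (?I u \<longleftrightarrow> \<not> ?I v)" if "?N v" for v
    using that rankless_above tree_le_mem_tree_path(2)[OF tree rV] by metis
  then obtain g where g: "\<And>v. ?N v \<Longrightarrow> ?N (g v) \<and> tree_le V t r v (g v) \<and> g v \<noteq> v
      \<and> (?I (g v) \<longleftrightarrow> \<not> ?I v)"
    by metis
  assume "\<not> (\<forall>v\<in>V. rank_defined V adj t r v)"
  then obtain v0 where "?N v0"
    by blast
  define w where "w n = (g ^^ n) v0" for n
  have rankless: "?N (w n)" for n
    by (induction n) (simp_all add: w_def \<open>?N v0\<close> g)
  have w: "tree_le V t r (w n) (w (Suc n))" "w n \<noteq> w (Suc n)"
    "?I (w (Suc n)) \<longleftrightarrow> \<not> ?I (w n)" for n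
    using g[OF rankless[of n]] by (auto simp: w_def)
  obtain f L where ray: "is_ray V t f" and "strict_mono L" and fL: "\<And>n. f (L n) = w n"
    using tree_chain_ray[of V t r w, OF tree rV w(1,2)] by blast
  have alternating: "infinite {i. ?I (f i) = b}" for b
    using infinite_preimage_strict_mono[OF \<open>strict_mono L\<close>, of "\<lambda>x. ?I x = b" f]
      infinite_alternating_values[of "\<lambda>n. ?I (w n)", OF w(3)] by (simp add: fL)
  have "alternating_ray V adj f"
    using ray sub alternating[of True] alternating[of False]
    unfolding alternating_ray_def is_ray_def by auto
  with assms(4) show False
    by blast
qed

end
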